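(* Let $d\ge1$ and let $\Sigma$ be a $d$-dimensional pseudomanifold such that $\tilde H_{d-1}(\Sigma;\mathbb{Z})=0$. Then $K_{d-1}(\Sigma)$ is a cyclic group; more precisely, for any facet $\sigma$ of $\Sigma$, the class of $\partial_d\sigma$ generates $K_{d-1}(\Sigma)$.
   Context: A $d$-dimensional pseudomanifold is a pure $d$-dimensional simplicial complex in which every $(d-1)$-dimensional face (ridge) is contained in at most two $d$-dimensional faces (facets), and which is strongly connected: for any two facets $\sigma,\sigma'$ there is a sequence of facets $\sigma=\sigma_0,\dots,\sigma_k=\sigma'$ with $\sigma_j$ and $\sigma_{j+1}$ sharing a ridge. $C_i(\Sigma;\mathbb{Z})$ is free abelian on the (fixed-orientation) $i$-faces, $\partial_i$ the simplicial boundary map, $\partial^*_i$ its transpose, $\tilde H$ reduced homology. The critical group is $K_i(\Sigma)=\ker\partial_i/\operatorname{im}(\partial_{i+1}\partial^*_{i+1})$. *)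

theory Defs
  imports Main
begin

(* Faces are finite vertex sets; the empty face is included (closure under subsets),
   which realises the augmentation needed for reduced homology.
   Faces with card n have dimension n - 1.  The fixed orientation of a face is the
   one given by the increasing order of its vertices. *)

definition simplicial_complex :: "'v set set \<Rightarrow> bool" where
  "simplicial_complex K \<longleftrightarrow> finite K \<and> K \<noteq> {} \<and> (\<forall>F\<in>K. finite F) \<and>
     (\<forall>F\<in>K. \<forall>G. G \<subseteq> F \<longrightarrow> G \<in> K)"

definition faces :: "'v set set \<Rightarrow> nat \<Rightarrow> 'v set set" where
  "faces K n = {F \<in> K. card F = n}"

definition pseudomanifold :: "'v set set \<Rightarrow> nat \<Rightarrow> bool" where
  "pseudomanifold K d \<longleftrightarrow> simplicial_complex K \<and>
     faces K (d+1) \<noteq> {} \<and>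
     (\<forall>F\<in>K. \<exists>G\<in>faces K (d+1). F \<subseteq> G) \<and>
     (\<forall>R\<in>faces K d. card {G \<in> faces K (d+1). R \<subseteq> G} \<le> 2) \<and>
     (\<forall>s\<in>faces K (d+1). \<forall>s'\<in>faces K (d+1).
        (s, s') \<in> {(a, b). a \<in> faces K (d+1) \<and> b \<in> faces K (d+1) \<and> card (a \<inter> b) = d}\<^sup>*)"

definition chains :: "'v set set \<Rightarrow> nat \<Rightarrow> ('v set \<Rightarrow> int) set" where
  "chains K n = {c. \<forall>F. F \<notin> faces K n \<longrightarrow> c F = 0}"

(* incidence number [sigma : tau] for the oriented simplicial boundary:
   if sigma = {v_0 < ... < v_i} and tau = sigma - {v_j}, it is (-1)^j *)
definition incidence :: "'v::linorder set \<Rightarrow> 'v set \<Rightarrow> int" where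
  "incidence \<sigma> \<tau> = (if \<tau> \<subseteq> \<sigma> \<and> card \<sigma> = card \<tau> + 1
      then (-1) ^ card {w \<in> \<tau>. w < the_elem (\<sigma> - \<tau>)} else 0)"

definition bd :: "'v::linorder set set \<Rightarrow> nat \<Rightarrow> ('v set \<Rightarrow> int) \<Rightarrow> ('v set \<Rightarrow> int)" where
  "bd K n c = (\<lambda>\<tau>. if \<tau> \<in> faces K (n - 1)
      then (\<Sum>\<sigma>\<in>faces K n. incidence \<sigma> \<tau> * c \<sigma>) else 0)"

definition cobd :: "'v::linorder set set \<Rightarrow> nat \<Rightarrow> ('v set \<Rightarrow> int) \<Rightarrow> ('v set \<Rightarrow> int)" where
  "cobd K n c = (\<lambda>\<sigma>. if \<sigma> \<in> faces K n
      then (\<Sum>\<tau>\<in>faces K (n - 1). incidence \<sigma> \<tau> * c \<tau>) else 0)"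

definition elem_chain :: "'v set \<Rightarrow> ('v set \<Rightarrow> int)" where
  "elem_chain \<sigma> = (\<lambda>F. if F = \<sigma> then 1 else 0)"

end

theory Submission
  imports Defs
begin

(* Write n = d+1 for the number of vertices of a facet and fix a facet sigma.
   Let M be the set of n-chains of the form  k * sigma + cobd c  (c a d-chain).  M is closed
   under integer linear combinations.  If two facets y, w share a ridge R, then in a
   pseudomanifold y and w are the only facets containing R, so  cobd R = +-y +-w  and hence
   w lies in M as soon as y does.  By strong connectivity every elementary facet chain, and
   therefore every n-chain, lies in M.  Finally, a d-cycle z is the boundary bd b of some
   n-chain b (vanishing homology); writing b = k * sigma + cobd c and applying the linear map
   bd gives  z = k * bd sigma + bd (cobd c),  which is the theorem.  The argument does not
   need the hypothesis d >= 1. *)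

lemma cobd_linear:
  "cobd K n (\<lambda>x. a * f x + b * g x) = (\<lambda>x. a * cobd K n f x + b * cobd K n g x)"
  unfolding cobd_def by (auto simp: fun_eq_iff sum.distrib sum_distrib_left algebra_simps)

lemma bd_linear: "bd K n (\<lambda>x. a * f x + g x) = (\<lambda>x. a * bd K n f x + bd K n g x)"
  unfolding bd_def by (auto simp: fun_eq_iff sum.distrib sum_distrib_left algebra_simps)

lemma cobd_zero: "cobd K n (\<lambda>_. 0) = (\<lambda>_. 0)"
  unfolding cobd_def by auto

lemma zero_in_chains: "(\<lambda>_. 0) \<in> chains K n"
  unfolding chains_def by simp

lemma elem_chain_in_chains: "\<tau> \<in> faces K n \<Longrightarrow> elem_chain \<tau> \<in> chains K n"
  unfolding chains_def elem_chain_def by auto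

lemma chain_expansion:
  assumes "finite K" "b \<in> chains K n"
  shows "b = (\<lambda>x. \<Sum>\<tau>\<in>faces K n. b \<tau> * elem_chain \<tau> x)"
proof
  fix x
  have "finite (faces K n)" using assms(1) unfolding faces_def by simp
  then show "b x = (\<Sum>\<tau>\<in>faces K n. b \<tau> * elem_chain \<tau> x)"
    using assms(2) unfolding chains_def elem_chain_def
    by (cases "x \<in> faces K n") (auto simp: if_distrib sum.delta' cong: if_cong)
qed

definition multiples_mod_cobd :: "'v::linorder set set \<Rightarrow> nat \<Rightarrow> 'v set \<Rightarrow> ('v set \<Rightarrow> int) set"
  where "multiples_mod_cobd K d \<sigma> =
    {f. \<exists>k::int. \<exists>c\<in>chains K d. f = (\<lambda>F. k * elem_chain \<sigma> F + cobd K (d+1) c F)}"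

lemma multiples_mod_cobd_linear:
  assumes "f \<in> multiples_mod_cobd K d \<sigma>" "g \<in> multiples_mod_cobd K d \<sigma>"
  shows "(\<lambda>x. a * f x + b * g x) \<in> multiples_mod_cobd K d \<sigma>"
proof -
  obtain k1 c1 where c1: "c1 \<in> chains K d"
    and f: "f = (\<lambda>F. k1 * elem_chain \<sigma> F + cobd K (d+1) c1 F)"
    using assms(1) unfolding multiples_mod_cobd_def by blast
  obtain k2 c2 where c2: "c2 \<in> chains K d"
    and g: "g = (\<lambda>F. k2 * elem_chain \<sigma> F + cobd K (d+1) c2 F)"
    using assms(2) unfolding multiples_mod_cobd_def by blast
  have c: "(\<lambda>x. a * c1 x + b * c2 x) \<in> chains K d"
    using c1 c2 unfolding chains_def by simp
  have "(\<lambda>x. a * f x + b * g x) =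
      (\<lambda>F. (a*k1 + b*k2) * elem_chain \<sigma> F + cobd K (d+1) (\<lambda>x. a * c1 x + b * c2 x) F)"
    unfolding f g cobd_linear by (simp add: fun_eq_iff algebra_simps)
  then show ?thesis using c unfolding multiples_mod_cobd_def by blast
qed

lemma multiples_mod_cobd_self: "elem_chain \<sigma> \<in> multiples_mod_cobd K d \<sigma>"
proof -
  have "elem_chain \<sigma> = (\<lambda>F. 1 * elem_chain \<sigma> F + cobd K (d+1) (\<lambda>_. 0) F)"
    by (simp add: cobd_zero)
  then show ?thesis using zero_in_chains unfolding multiples_mod_cobd_def by blast
qed

lemma multiples_mod_cobd_cobd:
  "c \<in> chains K d \<Longrightarrow> cobd K (d+1) c \<in> multiples_mod_cobd K d \<sigma>"
  unfolding multiples_mod_cobd_def by (rule CollectI, rule exI[of _ 0]) auto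

lemma multiples_mod_cobd_sum:
  assumes "finite A" "\<forall>\<tau>\<in>A. g \<tau> \<in> multiples_mod_cobd K d \<sigma>"
  shows "(\<lambda>x. \<Sum>\<tau>\<in>A. h \<tau> * g \<tau> x) \<in> multiples_mod_cobd K d \<sigma>"
  using assms
proof (induction A rule: finite_induct)
  case empty
  show ?case using multiples_mod_cobd_cobd[OF zero_in_chains] by (simp add: cobd_zero)
next
  case (insert a A)
  have "(\<lambda>x. h a * g a x + 1 * (\<Sum>\<tau>\<in>A. h \<tau> * g \<tau> x)) \<in> multiples_mod_cobd K d \<sigma>"
    using insert by (intro multiples_mod_cobd_linear) auto
  then show ?case using insert by simp
qed

lemma incidence_square:
  assumes "R \<subseteq> F" "card F = card R + 1"
  shows "incidence F R * incidence F R = 1"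
  using assms unfolding incidence_def
  by (simp add: power_mult_distrib[symmetric] flip: power_add mult_2)

lemma cobd_elem_chain:
  assumes "finite K" "R \<in> faces K d"
  shows "cobd K (d+1) (elem_chain R) = (\<lambda>F. if F \<in> faces K (d+1) then incidence F R else 0)"
proof
  fix F
  have "(\<Sum>\<tau>\<in>faces K d. incidence F \<tau> * elem_chain R \<tau>) = incidence F R"
    using assms unfolding elem_chain_def faces_def
    by (simp add: if_distrib sum.delta cong: if_cong)
  then show "cobd K (d+1) (elem_chain R) F = (if F \<in> faces K (d+1) then incidence F R else 0)"
    unfolding cobd_def by simp
qed

lemma incidence_not_subset: "\<not> \<tau> \<subseteq> \<sigma> \<Longrightarrow> incidence \<sigma> \<tau> = 0"
  unfolding incidence_def by simp

lemma cobd_ridge_two_cofaces: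
  assumes "finite K" "R \<in> faces K d" "y \<noteq> w"
    and cofaces: "{G \<in> faces K (d+1). R \<subseteq> G} = {y, w}"
  shows "cobd K (d+1) (elem_chain R) =
           (\<lambda>F. incidence y R * elem_chain y F + incidence w R * elem_chain w F)"
proof
  fix F
  have yw: "y \<in> faces K (d+1)" "w \<in> faces K (d+1)" using cofaces by blast+
  have ce: "cobd K (d+1) (elem_chain R) F = (if F \<in> faces K (d+1) then incidence F R else 0)"
    by (simp only: cobd_elem_chain[OF assms(1,2)])
  consider "F = y" | "F = w" | "F \<notin> faces K (d+1)" | "F \<in> faces K (d+1)" "\<not> R \<subseteq> F" "F \<noteq> y" "F \<noteq> w"
    using cofaces by blast
  then show "cobd K (d+1) (elem_chain R) F =
      incidence y R * elem_chain y F + incidence w R * elem_chain w F"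
    unfolding ce unfolding elem_chain_def
    by cases (use \<open>y \<noteq> w\<close> yw incidence_not_subset[of R F] in auto)
qed

lemma pseudomanifold_simplicial_complex: "pseudomanifold K d \<Longrightarrow> simplicial_complex K"
  unfolding pseudomanifold_def by simp

lemma pseudomanifold_ridge_bound:
  "pseudomanifold K d \<Longrightarrow> R \<in> faces K d \<Longrightarrow> card {G \<in> faces K (d+1). R \<subseteq> G} \<le> 2"
  unfolding pseudomanifold_def by simp

lemma pseudomanifold_finite: "pseudomanifold K d \<Longrightarrow> finite K"
  using pseudomanifold_simplicial_complex unfolding simplicial_complex_def by blast

definition facet_adjacency :: "'v set set \<Rightarrow> nat \<Rightarrow> ('v set \<times> 'v set) set" where
  "facet_adjacency K d =
    {(a, b). a \<in> faces K (d+1) \<and> b \<in> faces K (d+1) \<and> card (a \<inter> b) = d}"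

lemma pseudomanifold_strongly_connected:
  "pseudomanifold K d \<Longrightarrow> s \<in> faces K (d+1) \<Longrightarrow> s' \<in> faces K (d+1) \<Longrightarrow>
    (s, s') \<in> (facet_adjacency K d)\<^sup>*"
  unfolding pseudomanifold_def facet_adjacency_def by simp

lemma pseudomanifold_ridge_cofaces:
  assumes pm: "pseudomanifold K d"
    and y: "y \<in> faces K (d+1)" and w: "w \<in> faces K (d+1)" and yw: "card (y \<inter> w) = d"
  shows "y \<inter> w \<in> faces K d" "y \<noteq> w"
    "{G \<in> faces K (d+1). y \<inter> w \<subseteq> G} = {y, w}"
proof -
  have sc: "simplicial_complex K" using pm by (rule pseudomanifold_simplicial_complex)
  have yK: "y \<in> K" and cy: "card y = d+1" using y unfolding faces_def by auto
  have "y \<inter> w \<in> K"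
    using sc yK unfolding simplicial_complex_def by (meson Int_lower1)
  then show R: "y \<inter> w \<in> faces K d" using yw unfolding faces_def by simp
  show "y \<noteq> w" using yw cy by auto
  then have two: "card {y, w} = 2" by simp
  let ?C = "{G \<in> faces K (d+1). y \<inter> w \<subseteq> G}"
  have le2: "card ?C \<le> 2" using pm R by (rule pseudomanifold_ridge_bound)
  have fin: "finite ?C"
    using sc unfolding simplicial_complex_def faces_def by simp
  have sub: "{y, w} \<subseteq> ?C" using y w by auto
  show "?C = {y, w}" using card_subset_eq[OF fin sub] card_mono[OF fin sub] le2 two by simp
qed

lemma multiples_mod_cobd_adjacent:
  assumes pm: "pseudomanifold K d"
    and y: "y \<in> faces K (d+1)" and w: "w \<in> faces K (d+1)" and yw: "card (y \<inter> w) = d"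
    and y_in: "elem_chain y \<in> multiples_mod_cobd K d \<sigma>"
  shows "elem_chain w \<in> multiples_mod_cobd K d \<sigma>"
proof -
  define R where "R = y \<inter> w"
  note ridge = pseudomanifold_ridge_cofaces[OF pm y w yw, folded R_def]
  note cobdR = cobd_ridge_two_cofaces[OF pseudomanifold_finite[OF pm] ridge]
  have sign: "incidence w R * incidence w R = 1"
    using w ridge(1) unfolding R_def faces_def by (intro incidence_square) auto
  have "elem_chain w = (\<lambda>x. incidence w R * cobd K (d+1) (elem_chain R) x
                  + (- incidence w R * incidence y R) * elem_chain y x)"
  proof
    fix x
    have "incidence w R * cobd K (d+1) (elem_chain R) x
            = incidence w R * incidence y R * elem_chain y x
              + (incidence w R * incidence w R) * elem_chain w x"
      unfolding cobdR by (simp add: algebra_simps)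
    then show "elem_chain w x = incidence w R * cobd K (d+1) (elem_chain R) x
                  + (- incidence w R * incidence y R) * elem_chain y x"
      unfolding sign by simp
  qed
  moreover have "cobd K (d+1) (elem_chain R) \<in> multiples_mod_cobd K d \<sigma>"
    using ridge(1) by (intro multiples_mod_cobd_cobd elem_chain_in_chains)
  ultimately show ?thesis
    using y_in by (metis (no_types) multiples_mod_cobd_linear)
qed

lemma pseudomanifold_chains_mod_cobd:
  assumes pm: "pseudomanifold K d" and \<sigma>: "\<sigma> \<in> faces K (d+1)" and b: "b \<in> chains K (d+1)"
  shows "b \<in> multiples_mod_cobd K d \<sigma>"
proof -
  have facet_in: "elem_chain \<tau> \<in> multiples_mod_cobd K d \<sigma>" if "\<tau> \<in> faces K (d+1)" for \<tau>
  proof -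
    have "(\<sigma>, \<tau>) \<in> (facet_adjacency K d)\<^sup>*"
      using pm \<sigma> that by (rule pseudomanifold_strongly_connected)
    then show ?thesis
    proof (induction rule: rtrancl_induct)
      case base
      show ?case by (rule multiples_mod_cobd_self)
    next
      case (step y w)
      then show ?case using multiples_mod_cobd_adjacent[OF pm] unfolding facet_adjacency_def by blast
    qed
  qed
  have "finite K" using pm by (rule pseudomanifold_finite)
  moreover have "finite (faces K (d+1))" using \<open>finite K\<close> unfolding faces_def by simp
  ultimately have "(\<lambda>x. \<Sum>\<tau>\<in>faces K (d+1). b \<tau> * elem_chain \<tau> x) \<in> multiples_mod_cobd K d \<sigma>"
    using facet_in by (intro multiples_mod_cobd_sum) auto
  then show ?thesis using chain_expansion[OF \<open>finite K\<close> b] by simp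
qed

theorem mainTheorem10:
  fixes K :: "'v::linorder set set" and d :: nat
  assumes "d \<ge> 1"
    and "pseudomanifold K d"
    and "\<forall>z\<in>chains K d. bd K d z = (\<lambda>_. 0) \<longrightarrow>
           (\<exists>b\<in>chains K (d+1). bd K (d+1) b = z)"
  shows "\<forall>\<sigma>\<in>faces K (d+1). \<forall>z\<in>chains K d. bd K d z = (\<lambda>_. 0) \<longrightarrow>
           (\<exists>k::int. \<exists>c\<in>chains K d.
              z = (\<lambda>F. k * bd K (d+1) (elem_chain \<sigma>) F + bd K (d+1) (cobd K (d+1) c) F))"
proof (intro ballI impI)
  fix \<sigma> z
  assume \<sigma>: "\<sigma> \<in> faces K (d+1)" and "z \<in> chains K d" and "bd K d z = (\<lambda>_. 0)"
  then obtain b where b: "b \<in> chains K (d+1)" and bz: "bd K (d+1) b = z"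
    using assms(3) by blast
  from pseudomanifold_chains_mod_cobd[OF assms(2) \<sigma> b]
  obtain k c where c: "c \<in> chains K d" and "b = (\<lambda>F. k * elem_chain \<sigma> F + cobd K (d+1) c F)"
    unfolding multiples_mod_cobd_def by blast
  then have "z = (\<lambda>F. k * bd K (d+1) (elem_chain \<sigma>) F + bd K (d+1) (cobd K (d+1) c) F)"
    using bz by (simp add: bd_linear)
  then show "\<exists>k::int. \<exists>c\<in>chains K d.
      z = (\<lambda>F. k * bd K (d+1) (elem_chain \<sigma>) F + bd K (d+1) (cobd K (d+1) c) F)"
    using c by blast
qed

end
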